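(* Let $\omega\in\mathbb{F}_8$ be a root of $y^3+y+1$, let $m\in\mathbb{N}$, let $\emptyset\neq L\subsetneq[m]$, let $D=\Delta_L+\omega\Delta_L+\omega^2\Delta_L\subseteq\mathbb{F}_8^m$ and $D^c=\mathbb{F}_8^m\setminus D$. Then $C_{D^c}$ is a $2$-weight linear code over $\mathbb{F}_8$ of length $2^{3m}-2^{3|L|}$, dimension $m$ and minimum distance $7\cdot2^{3(m-1)}-7\cdot2^{3(|L|-1)}$; its codewords have weights $0$, $7\cdot2^{3(m-1)}-7\cdot2^{3(|L|-1)}$ and $7\cdot2^{3(m-1)}$. Moreover, $C_{D^c}$ is a Griesmer code and hence distance optimal, and it is a minimal code if $3(m-|L|)-4\ge0$.
   Context: $[m]=\{1,\dots,m\}$; $\Delta_L=\{w\in\mathbb{F}_2^m:\{i:w_i\ne0\}\subseteq L\}$. $A+\omega B+\omega^2C=\{a+\omega b+\omega^2c: a\in A,b\in B,c\in C\}$. For an ordered finite set $P\subseteq\mathbb{F}_8^m$, $C_P=\{(v\cdot d)_{d\in P}: v\in\mathbb{F}_8^m\}$. An $l$-weight code has exactly $l$ distinct nonzero Hamming weights. An $[n,k,d]$ code over $\mathbb{F}_q$ is Griesmer if $\sum_{i=0}^{k-1}\lceil d/q^i\rceil=n$, and distance optimal if no $[n,k,d+1]$ linear code over $\mathbb{F}_q$ exists. A code is minimal if for every nonzero codeword $c$, each nonzero codeword $c'$ with $\mathrm{Supp}(c')\subseteq\mathrm{Supp}(c)$ is a scalar multiple of $c$. *)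

theory Defs
  imports Complex_Main "HOL-Library.Function_Algebras" "HOL-Library.Cardinality"
begin

text \<open>Vectors of F^m are functions 'n => 'a on a finite index type 'n with CARD('n) = m.
  A code with coordinate set I is a set of functions 'i => 'a vanishing outside I.\<close>

definition dotp :: "('n::finite \<Rightarrow> 'a::field) \<Rightarrow> ('n \<Rightarrow> 'a) \<Rightarrow> 'a" where
  "dotp v d = (\<Sum>i\<in>UNIV. v i * d i)"

definition DeltaL :: "'n set \<Rightarrow> ('n \<Rightarrow> 'a::field) set" where
  "DeltaL L = {w. (\<forall>i. w i \<in> {0, 1}) \<and> {i. w i \<noteq> 0} \<subseteq> L}"

definition Dset :: "'a::field \<Rightarrow> 'n set \<Rightarrow> ('n \<Rightarrow> 'a) set" where
  "Dset \<omega> L = {(\<lambda>i. a i + \<omega> * b i + \<omega>^2 * c i) | a b c.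
                  a \<in> DeltaL L \<and> b \<in> DeltaL L \<and> c \<in> DeltaL L}"

text \<open>C_P = {(v . d)_{d in P} : v in F^m}, coordinates indexed by P itself.\<close>
definition codeP :: "('n::finite \<Rightarrow> 'a::field) set \<Rightarrow> (('n \<Rightarrow> 'a) \<Rightarrow> 'a) set" where
  "codeP P = (\<lambda>v. \<lambda>d. if d \<in> P then dotp v d else 0) ` UNIV"

definition hw :: "('i \<Rightarrow> 'a::zero) \<Rightarrow> nat" where
  "hw c = card {i. c i \<noteq> 0}"

definition is_lin_code :: "'i set \<Rightarrow> ('i \<Rightarrow> 'a::field) set \<Rightarrow> bool" where
  "is_lin_code I C \<longleftrightarrow> finite I \<and> (\<forall>c\<in>C. \<forall>i. i \<notin> I \<longrightarrow> c i = 0) \<and> (\<lambda>i. 0) \<in> C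
     \<and> (\<forall>x\<in>C. \<forall>y\<in>C. (\<lambda>i. x i + y i) \<in> C) \<and> (\<forall>a. \<forall>x\<in>C. (\<lambda>i. a * x i) \<in> C)"

definition code_dim :: "('i \<Rightarrow> 'a::field) set \<Rightarrow> nat" where
  "code_dim C = vector_space.dim (\<lambda>(a::'a) (x::'i \<Rightarrow> 'a). \<lambda>i. a * x i) C"

definition nz_weights :: "('i \<Rightarrow> 'a::zero) set \<Rightarrow> nat set" where
  "nz_weights C = {hw c | c. c \<in> C \<and> c \<noteq> (\<lambda>i. 0)}"

definition min_dist :: "('i \<Rightarrow> 'a::zero) set \<Rightarrow> nat" where
  "min_dist C = Min (nz_weights C)"

definition is_l_weight :: "nat \<Rightarrow> ('i \<Rightarrow> 'a::zero) set \<Rightarrow> bool" where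
  "is_l_weight l C \<longleftrightarrow> card (nz_weights C) = l"

definition griesmer :: "nat \<Rightarrow> nat \<Rightarrow> nat \<Rightarrow> 'a::finite itself \<Rightarrow> bool" where
  "griesmer n k d TYPE('a) \<longleftrightarrow>
     (\<Sum>i<k. nat \<lceil>real d / real (CARD('a) ^ i)\<rceil>) = n"

definition dist_optimal :: "nat \<Rightarrow> nat \<Rightarrow> nat \<Rightarrow> 'a::field itself \<Rightarrow> bool" where
  "dist_optimal n k d TYPE('a) \<longleftrightarrow>
     \<not> (\<exists>C :: (nat \<Rightarrow> 'a) set. is_lin_code {..<n} C \<and> code_dim C = k \<and> min_dist C = d + 1)"

definition minimal_code :: "('i \<Rightarrow> 'a::field) set \<Rightarrow> bool" where
  "minimal_code C \<longleftrightarrow> (\<forall>c\<in>C. c \<noteq> (\<lambda>i. 0) \<longrightarrow> (\<forall>c'\<in>C. c' \<noteq> (\<lambda>i. 0) \<and> {i. c' i \<noteq> 0} \<subseteq> {i. c i \<noteq> 0}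
      \<longrightarrow> (\<exists>a. c' = (\<lambda>i. a * c i))))"

end

theory Submission
  imports Defs "HOL-Library.FuncSet" "HOL-Number_Theory.Residues"
begin

text \<open>
  Since \<open>1, \<omega>, \<omega>\<^sup>2\<close> is a basis of \<open>\<bbbF>\<^sub>8\<close> over \<open>\<bbbF>\<^sub>2\<close>, \<open>D\<close> is the set of vectors
  supported on \<open>L\<close>, so \<open>D\<^sup>c\<close> has \<open>q\<^sup>m - q\<^sup>l\<close> elements (\<open>q = 8\<close>, \<open>l = |L|\<close>).
  A nonzero linear functional on a finite vector space takes every value equally often. Hence
  \<open>d \<mapsto> v \<cdot> d\<close> is nonzero on \<open>(q - 1) q\<^sup>m\<^sup>-\<^sup>1\<close> vectors of \<open>\<bbbF>\<^sub>q\<^sup>m\<close>, and on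
  \<open>(q - 1) q\<^sup>l\<^sup>-\<^sup>1\<close> vectors of \<open>D\<close> unless \<open>v\<close> vanishes on \<open>L\<close>, in which case on none;
  subtracting gives the two nonzero weights. As \<open>e\<^sub>j\<close> and \<open>e\<^sub>j + e\<^sub>k\<close> with \<open>k \<notin> L\<close> lie
  in \<open>D\<^sup>c\<close>, a codeword determines \<open>v\<close>, so the dimension is \<open>m\<close>.
  The length equals the Griesmer sum for \<open>d\<close>, and \<open>(q - 1) n = q d\<close> means that the code
  attains the Plotkin bound, which rules out an \<open>[n, m, d + 1]\<close> code.
  Finally, if the support of the codeword of \<open>u\<close> lies in that of the codeword of \<open>v\<close> but
  \<open>u\<close> is no multiple of \<open>v\<close>, then all \<open>(q - 1) q\<^sup>m\<^sup>-\<^sup>2\<close> vectors \<open>x\<close> with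
  \<open>v \<cdot> x = 0 \<noteq> u \<cdot> x\<close> lie in \<open>D - {0}\<close>, which is too small once \<open>m - l \<ge> 2\<close>.
\<close>

section \<open>Fields with eight elements\<close>

lemma CHAR_eq_2_if_CARD_eq_8:
  assumes "CARD('a::{field,finite}) = 8"
  shows "CHAR('a) = 2"
proof -
  have prime: "prime CHAR('a)"
    by (simp add: finite_imp_CHAR_pos prime_CHAR_semidom)
  have "CHAR('a) dvd 2 ^ 3"
    using CHAR_dvd_CARD[where 'a='a] by (simp only: assms power3_eq_cube) simp
  then have "CHAR('a) dvd 2"
    by (rule prime_dvd_power[OF prime])
  then show ?thesis
    by (rule primes_dvd_imp_eq[OF prime two_is_prime_nat])
qed

lemma F2_combination_eq_0_iff:
  fixes \<omega> :: "'a::field"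
  assumes char: "CHAR('a) = 2" and root: "\<omega>^3 + \<omega> + 1 = 0"
    and "a \<in> {0, 1}" "b \<in> {0, 1}" "c \<in> {0, 1}"
  shows "a + b * \<omega> + c * \<omega>^2 = 0 \<longleftrightarrow> a = 0 \<and> b = 0 \<and> c = 0"
proof -
  have two: "(2::'a) = 0"
    using of_nat_CHAR[where 'a='a] char by simp
  have w0: "\<omega> \<noteq> 0"
    using root by auto
  have w1: "1 + \<omega> \<noteq> 0"
  proof
    assume "1 + \<omega> = 0"
    then have "\<omega> = 1"
      using uminus_CHAR_2[OF char, of 1] by (simp add: add_eq_0_iff)
    then have "(2::'a) + 1 = 0"
      using root by simp
    then show False
      using two by simp
  qed
  \<comment> \<open>Every nonzero combination is a factor of a product of the nonzero elements \<open>\<omega>\<close> and \<open>1 + \<omega>\<close>.\<close>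
  have "1 + \<omega>^2 = (1 + \<omega>)^2" "\<omega> + \<omega>^2 = \<omega> * (1 + \<omega>)"
    "(1 + \<omega>) * (1 + \<omega> + \<omega>^2) = \<omega>"
    using root two by (simp_all add: algebra_simps power2_eq_square power3_eq_cube)
  then have "\<omega>^2 \<noteq> 0" "1 + \<omega>^2 \<noteq> 0" "\<omega> + \<omega>^2 \<noteq> 0" "1 + \<omega> + \<omega>^2 \<noteq> 0"
    using w0 w1 by (metis mult_eq_0_iff power_eq_0_iff)+
  then show ?thesis
    using assms(3-5) w0 w1 by (elim insertE emptyE) simp_all
qed

lemma F2_combinations_eq_UNIV:
  fixes \<omega> :: "'a::{field,finite}"
  assumes card: "CARD('a) = 8" and root: "\<omega>^3 + \<omega> + 1 = 0"
  shows "(\<lambda>(a, b, c). a + b * \<omega> + c * \<omega>^2) ` ({0, 1} \<times> {0, 1} \<times> {0, 1}) = UNIV"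
proof -
  let ?F2 = "{0, 1 :: 'a}"
  let ?g = "\<lambda>(a, b, c). a + b * \<omega> + c * \<omega>^2"
  have char: "CHAR('a) = 2"
    using card by (rule CHAR_eq_2_if_CARD_eq_8)
  have double: "x + x = 0" for x :: 'a
    using minus_CHAR_2[OF char, of x x] by simp
  have sum_F2: "x + y \<in> ?F2" if "x \<in> ?F2" "y \<in> ?F2" for x y
    using that double[of 1] by auto
  have "(a, b, c) = (a', b', c')"
    if F2: "a \<in> ?F2" "b \<in> ?F2" "c \<in> ?F2" "a' \<in> ?F2" "b' \<in> ?F2" "c' \<in> ?F2"
      and eq: "?g (a, b, c) = ?g (a', b', c')" for a b c a' b' c'
  proof -
    have "(a + a') + (b + b') * \<omega> + (c + c') * \<omega>^2 = ?g (a, b, c) + ?g (a', b', c')"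
      by (simp add: algebra_simps)
    also have "\<dots> = 0"
      unfolding eq by (rule double)
    finally have "a + a' = 0 \<and> b + b' = 0 \<and> c + c' = 0"
      using F2_combination_eq_0_iff[OF char root sum_F2 sum_F2 sum_F2] F2 by simp
    then show ?thesis
      by (simp add: add_eq_0_iff2 uminus_CHAR_2[OF char])
  qed
  then have "inj_on ?g (?F2 \<times> ?F2 \<times> ?F2)"
    by (intro inj_onI) (clarify, blast)
  then have "card (?g ` (?F2 \<times> ?F2 \<times> ?F2)) = CARD('a)"
    using card by (simp add: card_image card_cartesian_product)
  then show ?thesis
    by (simp add: card_eq_UNIV_imp_eq_UNIV)
qed

section \<open>Vectors supported on a set of coordinates\<close>

definition supported_on :: "'i set \<Rightarrow> ('i \<Rightarrow> 'a::zero) set" where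
  "supported_on L = {x. \<forall>i. i \<notin> L \<longrightarrow> x i = 0}"

lemma Dset_eq_supported_on:
  fixes \<omega> :: "'a::{field,finite}" and L :: "'n set"
  assumes "CARD('a) = 8" and "\<omega>^3 + \<omega> + 1 = 0"
  shows "Dset \<omega> L = supported_on L"
proof
  have Delta: "w i = 0" if "w \<in> DeltaL L" "i \<notin> L" for w :: "'n \<Rightarrow> 'a" and i
    using that unfolding DeltaL_def by blast
  show "Dset \<omega> L \<subseteq> supported_on L"
  proof
    fix x
    assume "x \<in> Dset \<omega> L"
    then obtain a b c where abc: "a \<in> DeltaL L" "b \<in> DeltaL L" "c \<in> DeltaL L"
      and x: "x = (\<lambda>i. a i + \<omega> * b i + \<omega>^2 * c i)"
      unfolding Dset_def by blast
    have "a i = 0 \<and> b i = 0 \<and> c i = 0" if "i \<notin> L" for i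
      using Delta[OF abc(1) that] Delta[OF abc(2) that] Delta[OF abc(3) that] by simp
    then show "x \<in> supported_on L"
      unfolding supported_on_def x by simp
  qed
next
  let ?B = "{0, 1} \<times> {0, 1} \<times> {0, 1 :: 'a}"
  let ?g = "\<lambda>(a, b, c). a + b * \<omega> + c * \<omega>^2"
  show "supported_on L \<subseteq> Dset \<omega> L"
  proof
    fix x :: "'n \<Rightarrow> 'a"
    assume x: "x \<in> supported_on L"
    have surj: "y \<in> ?g ` ?B" for y
      by (subst F2_combinations_eq_UNIV[OF assms]) (rule UNIV_I)
    have "\<exists>abc. abc \<in> ?B \<and> x i = ?g abc \<and> (i \<notin> L \<longrightarrow> abc = (0, 0, 0))" for i
    proof (cases "i \<in> L")
      case True
      then show ?thesis
        using surj[of "x i"] by blast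
    next
      case False
      then have "x i = 0"
        using x by (simp add: supported_on_def)
      then show ?thesis
        by (intro exI[of _ "(0, 0, 0)"]) simp
    qed
    then have "\<forall>i. \<exists>abc. abc \<in> ?B \<and> x i = ?g abc \<and> (i \<notin> L \<longrightarrow> abc = (0, 0, 0))"
      by blast
    then obtain t where t: "\<forall>i. t i \<in> ?B \<and> x i = ?g (t i) \<and> (i \<notin> L \<longrightarrow> t i = (0, 0, 0))"
      by (rule choice[THEN exE])
    then have abc: "(\<lambda>i. fst (t i)) \<in> DeltaL L" "(\<lambda>i. fst (snd (t i))) \<in> DeltaL L"
      "(\<lambda>i. snd (snd (t i))) \<in> DeltaL L"
      unfolding DeltaL_def mem_Times_iff by force+
    have "x = (\<lambda>i. fst (t i) + \<omega> * fst (snd (t i)) + \<omega>^2 * snd (snd (t i)))"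
      using t by (simp add: fun_eq_iff case_prod_beta mult.commute)
    also have "\<dots> \<in> Dset \<omega> L"
      unfolding Dset_def
      by (intro CollectI exI[of _ "\<lambda>i. fst (t i)"] exI[of _ "\<lambda>i. fst (snd (t i))"]
          exI[of _ "\<lambda>i. snd (snd (t i))"]) (simp add: abc)
    finally show "x \<in> Dset \<omega> L" .
  qed
qed

lemma card_supported_on:
  assumes "finite L"
  shows "card (supported_on L :: ('i \<Rightarrow> 'a::{zero,finite}) set) = CARD('a) ^ card L"
proof -
  have inj: "inj_on (\<lambda>x. restrict x L) (supported_on L :: ('i \<Rightarrow> 'a) set)"
  proof (rule inj_onI)
    fix x y :: "'i \<Rightarrow> 'a"
    assume xy: "x \<in> supported_on L" "y \<in> supported_on L" and eq: "restrict x L = restrict y L"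
    have "x i = y i" for i
      using fun_cong[OF eq, of i] xy by (cases "i \<in> L") (simp_all add: supported_on_def restrict_def)
    then show "x = y" ..
  qed
  have "(\<lambda>x. restrict x L) ` supported_on L = (L \<rightarrow>\<^sub>E (UNIV :: 'a set))"
  proof
    show "L \<rightarrow>\<^sub>E (UNIV :: 'a set) \<subseteq> (\<lambda>x. restrict x L) ` supported_on L"
    proof
      fix y :: "'i \<Rightarrow> 'a"
      assume "y \<in> L \<rightarrow>\<^sub>E UNIV"
      then have "y = restrict (\<lambda>i. if i \<in> L then y i else 0) L"
        by (auto simp: fun_eq_iff PiE_def extensional_def)
      then show "y \<in> (\<lambda>x. restrict x L) ` supported_on L"
        by (rule image_eqI[where x = "\<lambda>i. if i \<in> L then y i else 0"]) (simp add: supported_on_def)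
    qed
  qed auto
  then have "card (supported_on L :: ('i \<Rightarrow> 'a) set) = card (L \<rightarrow>\<^sub>E (UNIV :: 'a set))"
    using card_image[OF inj] by simp
  then show ?thesis
    using assms by (simp add: card_funcsetE)
qed

lemma finite_supported_on:
  "finite L \<Longrightarrow> finite (supported_on L :: ('i \<Rightarrow> 'a::{zero,finite}) set)"
  by (rule card_ge_0_finite) (simp add: card_supported_on)

section \<open>Finite vector spaces of functions\<close>

lemma sum_fun_apply: "(\<Sum>j\<in>A. f j) x = (\<Sum>j\<in>A. f j x)"
  by (induction A rule: infinite_finite_induct) auto

lemma vector_space_fun: "vector_space (\<lambda>(a::'a::field) (x::'i \<Rightarrow> 'a) i. a * x i)"
  by unfold_locales (auto simp: fun_eq_iff algebra_simps)

interpretation fun_vs: vector_space "\<lambda>(a::'a::field) (x::'i \<Rightarrow> 'a) i. a * x i"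
  by (rule vector_space_fun)

definition basis_vec :: "'n \<Rightarrow> 'n \<Rightarrow> 'a::zero_neq_one" where
  "basis_vec j = (\<lambda>i. of_bool (i = j))"

lemma inj_basis_vec: "inj (basis_vec :: 'n \<Rightarrow> 'n \<Rightarrow> 'a::zero_neq_one)"
proof (rule injI)
  fix j k :: 'n
  assume "basis_vec j = (basis_vec k :: 'n \<Rightarrow> 'a)"
  then have "basis_vec j j = (basis_vec k j :: 'a)"
    by simp
  then show "j = k"
    by (simp add: basis_vec_def)
qed

lemma sum_basis_vec: "(\<Sum>j\<in>UNIV. (\<lambda>i. x j * basis_vec j i)) = (x :: 'n::finite \<Rightarrow> 'a::field)"
  by (simp add: fun_eq_iff sum_fun_apply basis_vec_def)

lemma span_basis_vec: "fun_vs.span (range basis_vec) = (UNIV :: ('n::finite \<Rightarrow> 'a::field) set)"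
proof -
  have "(\<Sum>j\<in>UNIV. (\<lambda>i. x j * basis_vec j i)) \<in> fun_vs.span (range basis_vec)" for x :: "'n \<Rightarrow> 'a"
    by (intro fun_vs.span_sum fun_vs.span_scale[of _ _ "x j" for j] fun_vs.span_base) simp
  then show ?thesis
    by (auto simp: sum_basis_vec)
qed

lemma independent_basis_vec: "fun_vs.independent (range (basis_vec :: 'n::finite \<Rightarrow> 'n \<Rightarrow> 'a::field))"
proof
  assume "fun_vs.dependent (range (basis_vec :: 'n \<Rightarrow> 'n \<Rightarrow> 'a))"
  then obtain u where u: "\<exists>v\<in>range basis_vec. u v \<noteq> 0"
    and "(\<Sum>v\<in>range basis_vec. (\<lambda>i. u v * v i)) = (0 :: 'n \<Rightarrow> 'a)"
    using fun_vs.dependent_finite[of "range (basis_vec :: 'n \<Rightarrow> 'n \<Rightarrow> 'a)"] by auto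
  moreover have "(\<Sum>v\<in>range basis_vec. (\<lambda>i. u v * v i)) = (\<lambda>j. u (basis_vec j :: 'n \<Rightarrow> 'a))"
    by (simp add: sum.reindex inj_basis_vec sum_basis_vec)
  ultimately show False
    by (auto simp: fun_eq_iff)
qed

interpretation fun_fdvs: finite_dimensional_vector_space
  "\<lambda>(a::'a::field) (x::'n::finite \<Rightarrow> 'a) i. a * x i" "range basis_vec"
  by unfold_locales (simp_all add: span_basis_vec independent_basis_vec)

interpretation fun_fdvs_pair: finite_dimensional_vector_space_pair_1
  "\<lambda>(a::'a::field) (x::'n::finite \<Rightarrow> 'a) i. a * x i" "range basis_vec"
  "\<lambda>(a::'a) (x::'i \<Rightarrow> 'a) i. a * x i" ..

lemma dim_UNIV_fun: "fun_vs.dim (UNIV :: ('n::finite \<Rightarrow> 'a::field) set) = CARD('n)"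
  by (simp add: card_image[OF inj_basis_vec])

lemma card_subspace:
  fixes C :: "('i \<Rightarrow> 'a::{field,finite}) set"
  assumes C: "fun_vs.subspace C" "finite C"
  shows "card C = CARD('a) ^ fun_vs.dim C"
proof -
  obtain B where B: "B \<subseteq> C" "fun_vs.independent B" "C \<subseteq> fun_vs.span B" "card B = fun_vs.dim C"
    by (rule fun_vs.basis_exists)
  have finB: "finite B"
    using B(1) C(2) by (rule finite_subset)
  define comb where "comb u = (\<Sum>b\<in>B. (\<lambda>i. u b * b i))" for u :: "('i \<Rightarrow> 'a) \<Rightarrow> 'a"
  have comb_restrict: "comb u = comb (restrict u B)" for u
    unfolding comb_def by (rule sum.cong) auto
  have "comb u \<in> comb ` (B \<rightarrow>\<^sub>E UNIV)" for u
    by (rule image_eqI[of _ comb "restrict u B", OF comb_restrict]) simp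
  then have "comb ` (B \<rightarrow>\<^sub>E UNIV) = range comb"
    by blast
  also have "\<dots> = fun_vs.span B"
    unfolding comb_def by (rule fun_vs.span_finite[OF finB, symmetric])
  also have "\<dots> = C"
    using B(1,3) fun_vs.span_minimal[OF B(1) C(1)] by blast
  finally have image: "comb ` (B \<rightarrow>\<^sub>E UNIV) = C" .
  have "inj_on comb (B \<rightarrow>\<^sub>E UNIV)"
  proof (rule inj_onI)
    fix u u' :: "('i \<Rightarrow> 'a) \<Rightarrow> 'a"
    assume u: "u \<in> B \<rightarrow>\<^sub>E UNIV" "u' \<in> B \<rightarrow>\<^sub>E UNIV" and eq: "comb u = comb u'"
    have "(\<Sum>b\<in>B. (\<lambda>i. (u b - u' b) * b i)) = comb u - comb u'"
      by (simp add: comb_def fun_eq_iff sum_fun_apply left_diff_distrib sum_subtractf)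
    then have sum0: "(\<Sum>b\<in>B. (\<lambda>i. (u b - u' b) * b i)) = 0"
      by (simp add: eq)
    have "u b - u' b = 0" if "b \<in> B" for b
      using fun_vs.independentD[OF B(2) finB subset_refl sum0 that] by simp
    then show "u = u'"
      by (intro PiE_ext[OF u]) simp
  qed
  then have "card C = card (B \<rightarrow>\<^sub>E (UNIV :: 'a set))"
    using image card_image by fastforce
  then show ?thesis
    using finB B(4) by (simp add: card_funcsetE)
qed

lemma card_kernel_functional:
  fixes V :: "('i \<Rightarrow> 'a::{field,finite}) set" and \<phi> :: "('i \<Rightarrow> 'a) \<Rightarrow> 'a"
  assumes V: "fun_vs.subspace V" "finite V"
    and add: "\<And>x y. \<phi> (x + y) = \<phi> x + \<phi> y"
    and scale: "\<And>a x. \<phi> (\<lambda>i. a * x i) = a * \<phi> x"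
    and w: "w \<in> V" "\<phi> w \<noteq> 0"
  shows "card V = CARD('a) * card {x \<in> V. \<phi> x = 0}"
proof -
  have diff: "\<phi> (x - y) = \<phi> x - \<phi> y" for x y
    using add[of "x - y" y] by simp
  have fiber: "card {x \<in> V. \<phi> x = a} = card {x \<in> V. \<phi> x = 0}" for a
  proof -
    define y where "y = (\<lambda>i. a / \<phi> w * w i)"
    have "y \<in> V"
      unfolding y_def by (rule fun_vs.subspace_scale[OF V(1) w(1)])
    moreover have "\<phi> y = a"
      unfolding y_def scale using w(2) by simp
    ultimately have y: "y \<in> V" "\<phi> y = a" .
    have "bij_betw (\<lambda>x. x - y) {x \<in> V. \<phi> x = a} {x \<in> V. \<phi> x = 0}"
      by (rule bij_betw_byWitness[where f' = "\<lambda>x. x + y"])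
        (auto simp: y diff add fun_vs.subspace_diff[OF V(1)] fun_vs.subspace_add[OF V(1)])
    then show ?thesis
      by (rule bij_betw_same_card)
  qed
  have "card V = card (\<Union>a. {x \<in> V. \<phi> x = a})"
    by (rule arg_cong[where f = card]) blast
  also have "\<dots> = (\<Sum>a\<in>UNIV. card {x \<in> V. \<phi> x = a})"
    by (rule card_UN_disjoint) (use V(2) in auto)
  also have "\<dots> = (\<Sum>a\<in>(UNIV :: 'a set). card {x \<in> V. \<phi> x = 0})"
    by (intro sum.cong refl fiber)
  also have "\<dots> = CARD('a) * card {x \<in> V. \<phi> x = 0}"
    by simp
  finally show ?thesis .
qed

lemma card_nonkernel_functional:
  fixes V :: "('i \<Rightarrow> 'a::{field,finite}) set" and \<phi> :: "('i \<Rightarrow> 'a) \<Rightarrow> 'a"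
  assumes "fun_vs.subspace V" "finite V"
    and "\<And>x y. \<phi> (x + y) = \<phi> x + \<phi> y"
    and "\<And>a x. \<phi> (\<lambda>i. a * x i) = a * \<phi> x"
    and "w \<in> V" "\<phi> w \<noteq> 0"
  shows "CARD('a) * card {x \<in> V. \<phi> x \<noteq> 0} = (CARD('a) - 1) * card V"
proof -
  have "{x \<in> V. \<phi> x \<noteq> 0} = V - {x \<in> V. \<phi> x = 0}"
    by blast
  then have "card {x \<in> V. \<phi> x \<noteq> 0} = card V - card {x \<in> V. \<phi> x = 0}"
    using assms(2) by (simp add: card_Diff_subset)
  then show ?thesis
    using card_kernel_functional[where \<phi> = \<phi>, OF assms] by (simp add: diff_mult_distrib diff_mult_distrib2)
qed

lemma dotp_add_right: "dotp v (x + y) = dotp v x + dotp v y"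
  by (simp add: dotp_def distrib_left sum.distrib)

lemma dotp_scale_right: "dotp v (\<lambda>i. a * x i) = a * dotp v x"
  by (simp add: dotp_def sum_distrib_left algebra_simps)

lemma dotp_diff_right: "dotp v (x - y) = dotp v x - dotp v y"
  by (simp add: dotp_def right_diff_distrib sum_subtractf)

lemma dotp_add_left: "dotp (u + v) x = dotp u x + dotp v x"
  by (simp add: dotp_def distrib_right sum.distrib)

lemma dotp_scale_left: "dotp (\<lambda>i. a * v i) x = a * dotp v x"
  by (simp add: dotp_def sum_distrib_left algebra_simps)

lemma dotp_zero_right [simp]: "dotp v 0 = 0"
  by (simp add: dotp_def)

lemma dotp_zero_left [simp]: "dotp 0 x = 0"
  by (simp add: dotp_def)

lemma dotp_basis_vec_right: "dotp v (basis_vec j) = v j"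
  by (simp add: dotp_def basis_vec_def)

lemma subspace_supported_on: "fun_vs.subspace (supported_on L)"
  by (simp add: fun_vs.subspace_def supported_on_def)

lemma card_dotp_nonzero_supported_on:
  fixes v :: "'n::finite \<Rightarrow> 'a::{field,finite}"
  assumes "i0 \<in> S" "v i0 \<noteq> 0"
  shows "card {d \<in> supported_on S. dotp v d \<noteq> 0} = (CARD('a) - 1) * CARD('a) ^ (card S - 1)"
proof -
  have "basis_vec i0 \<in> supported_on S"
    using assms(1) by (auto simp: supported_on_def basis_vec_def)
  moreover have "dotp v (basis_vec i0) \<noteq> 0"
    using assms(2) by (simp add: dotp_basis_vec_right)
  ultimately have "CARD('a) * card {d \<in> supported_on S. dotp v d \<noteq> 0} = (CARD('a) - 1) * CARD('a) ^ card S"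
    using card_nonkernel_functional[where \<phi> = "dotp v", OF subspace_supported_on
        finite_supported_on dotp_add_right dotp_scale_right]
    by (simp add: card_supported_on)
  moreover have "card S \<noteq> 0"
    using assms(1) by auto
  then have "CARD('a) ^ card S = CARD('a) * CARD('a) ^ (card S - 1)"
    by (cases "card S") simp_all
  ultimately show ?thesis
    by simp
qed

lemma dotp_eq_0_if_vanishing_on_support:
  assumes "\<forall>i\<in>S. v i = 0" "d \<in> supported_on S"
  shows "dotp v d = 0"
  using assms by (auto simp: dotp_def supported_on_def intro!: sum.neutral)

section \<open>The code of the complement of a coordinate subspace\<close>

definition codeword :: "('n::finite \<Rightarrow> 'a::field) set \<Rightarrow> ('n \<Rightarrow> 'a) \<Rightarrow> ('n \<Rightarrow> 'a) \<Rightarrow> 'a" where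
  "codeword P v = (\<lambda>d. if d \<in> P then dotp v d else 0)"

lemma codeP_eq_range_codeword: "codeP P = range (codeword P)"
  by (simp add: codeP_def codeword_def)

lemma codeword_add: "codeword P (u + v) = codeword P u + codeword P v"
  by (simp add: codeword_def fun_eq_iff dotp_add_left)

lemma codeword_scale: "codeword P (\<lambda>i. a * v i) = (\<lambda>d. a * codeword P v d)"
  by (simp add: codeword_def fun_eq_iff dotp_scale_left)

lemma codeword_zero [simp]: "codeword P 0 = 0"
  by (simp add: codeword_def fun_eq_iff)

lemma linear_codeword: "Vector_Spaces.linear (\<lambda>a x i. a * x i) (\<lambda>a x i. a * x i) (codeword P)"
  by (simp add: Vector_Spaces.linear_iff vector_space_fun codeword_add codeword_scale)

lemma is_lin_code_codeP: "is_lin_code P (codeP (P :: ('n::finite \<Rightarrow> 'a::{field,finite}) set))"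
  unfolding is_lin_code_def codeP_eq_range_codeword
proof (intro conjI ballI allI impI)
  have "(\<lambda>d. 0) = codeword P (\<lambda>i. 0)"
    by (simp add: codeword_def fun_eq_iff dotp_def)
  then show "(\<lambda>d. 0) \<in> range (codeword P)"
    by simp
next
  fix c c' assume "c \<in> range (codeword P)" "c' \<in> range (codeword P)"
  then obtain u u' where "c = codeword P u" "c' = codeword P u'"
    by blast
  then have "(\<lambda>d. c d + c' d) = codeword P (u + u')"
    by (simp add: codeword_add fun_eq_iff)
  then show "(\<lambda>d. c d + c' d) \<in> range (codeword P)"
    by simp
next
  fix a c assume "c \<in> range (codeword P)"
  then obtain u where "c = codeword P u"
    by blast
  then have "(\<lambda>d. a * c d) = codeword P (\<lambda>i. a * u i)"
    by (simp add: codeword_scale)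
  then show "(\<lambda>d. a * c d) \<in> range (codeword P)"
    by simp
qed (auto simp: codeword_def)

lemma code_dim_codeP:
  assumes "inj (codeword P)"
  shows "code_dim (codeP (P :: ('n::finite \<Rightarrow> 'a::{field,finite}) set)) = CARD('n)"
proof -
  have "fun_vs.dim (range (codeword P)) = fun_vs.dim (UNIV :: ('n \<Rightarrow> 'a) set)"
    by (rule fun_fdvs_pair.dim_image_eq[OF linear_codeword]) (use assms in simp)
  then show ?thesis
    by (simp only: code_dim_def codeP_eq_range_codeword dim_UNIV_fun)
qed

lemma codeword_complement_eq_0_iff:
  fixes v :: "'n::finite \<Rightarrow> 'a::field"
  assumes "L \<noteq> UNIV"
  shows "codeword (- supported_on L) v = 0 \<longleftrightarrow> v = 0"
proof
  assume v: "codeword (- supported_on L) v = 0"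
  obtain i0 where i0: "i0 \<notin> L"
    using assms by blast
  have vanish: "dotp v x = 0" if "x i0 \<noteq> 0" for x
  proof -
    have "x \<notin> supported_on L"
      using that i0 by (auto simp: supported_on_def)
    then show ?thesis
      using fun_cong[OF v, of x] by (simp add: codeword_def)
  qed
  show "v = 0"
  proof
    fix j
    have "basis_vec i0 i0 \<noteq> (0 :: 'a)"
      by (simp add: basis_vec_def)
    from vanish[of "basis_vec i0", OF this] have "v i0 = 0"
      by (simp add: dotp_basis_vec_right)
    moreover have "v j + v i0 = 0" if "j \<noteq> i0"
    proof -
      have "(basis_vec j + basis_vec i0) i0 \<noteq> (0 :: 'a)"
        using that by (simp add: basis_vec_def)
      from vanish[of "basis_vec j + basis_vec i0", OF this] show ?thesis
        by (simp add: dotp_add_right dotp_basis_vec_right)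
    qed
    ultimately show "v j = 0 j"
      by (cases "j = i0") auto
  qed
qed simp

lemma inj_codeword_complement:
  assumes "L \<noteq> UNIV"
  shows "inj (codeword (- supported_on L) :: ('n::finite \<Rightarrow> 'a::field) \<Rightarrow> _)"
  using fun_fdvs_pair.linear_inj_iff_eq_0[OF linear_codeword] codeword_complement_eq_0_iff[OF assms]
  by blast

lemma hw_codeword: "hw (codeword P v) = card {d \<in> P. dotp v d \<noteq> 0}"
  unfolding hw_def codeword_def by (rule arg_cong[where f = card]) auto

lemma hw_codeword_complement:
  fixes v :: "'n::finite \<Rightarrow> 'a::{field,finite}"
  assumes "v \<noteq> 0"
  shows "hw (codeword (- supported_on L) v) = (CARD('a) - 1) * CARD('a) ^ (CARD('n) - 1)
    - (if \<exists>i\<in>L. v i \<noteq> 0 then (CARD('a) - 1) * CARD('a) ^ (card L - 1) else 0)"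
proof -
  obtain i0 where i0: "v i0 \<noteq> 0"
    using assms by (auto simp: fun_eq_iff)
  have "{d \<in> - supported_on L. dotp v d \<noteq> 0} = {d. dotp v d \<noteq> 0} - {d \<in> supported_on L. dotp v d \<noteq> 0}"
    by blast
  then have "hw (codeword (- supported_on L) v) = card {d. dotp v d \<noteq> 0} - card {d \<in> supported_on L. dotp v d \<noteq> 0}"
    by (simp add: hw_codeword) (subst card_Diff_subset; auto)
  moreover have "card {d. dotp v d \<noteq> 0} = (CARD('a) - 1) * CARD('a) ^ (CARD('n) - 1)"
    using card_dotp_nonzero_supported_on[of i0 UNIV v] i0 by (simp add: supported_on_def)
  moreover have "card {d \<in> supported_on L. dotp v d \<noteq> 0}
      = (if \<exists>i\<in>L. v i \<noteq> 0 then (CARD('a) - 1) * CARD('a) ^ (card L - 1) else 0)"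
    using card_dotp_nonzero_supported_on[of _ L v] dotp_eq_0_if_vanishing_on_support[of L v] by auto
  ultimately show ?thesis
    by simp
qed

lemma image_hw_eq_insert_nz_weights:
  assumes "(\<lambda>i. 0) \<in> C"
  shows "hw ` C = insert 0 (nz_weights C)"
  using assms image_eqI[of 0 hw "\<lambda>i. 0" C] by (auto simp: nz_weights_def hw_def)

lemma nz_weights_codeP_complement:
  assumes "L \<noteq> {}" "L \<noteq> UNIV"
  shows "nz_weights (codeP (- supported_on L :: ('n::finite \<Rightarrow> 'a::{field,finite}) set))
    = {(CARD('a) - 1) * CARD('a) ^ (CARD('n) - 1) - (CARD('a) - 1) * CARD('a) ^ (card L - 1),
       (CARD('a) - 1) * CARD('a) ^ (CARD('n) - 1)}"
proof -
  obtain i1 i0 where i1: "i1 \<in> L" and i0: "i0 \<notin> L"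
    using assms by blast
  let ?c = "codeword (- supported_on L) :: ('n \<Rightarrow> 'a) \<Rightarrow> _"
  have nz: "?c v \<noteq> (\<lambda>i. 0) \<longleftrightarrow> v \<noteq> 0" for v
    using codeword_complement_eq_0_iff[OF assms(2), of v] by (simp add: zero_fun_def)
  have "nz_weights (range ?c) = (\<lambda>v. hw (?c v)) ` {v. v \<noteq> 0}"
    unfolding nz_weights_def using nz by blast
  also have "\<dots> = {(CARD('a) - 1) * CARD('a) ^ (CARD('n) - 1) - (CARD('a) - 1) * CARD('a) ^ (card L - 1),
       (CARD('a) - 1) * CARD('a) ^ (CARD('n) - 1)}" (is "_ = {?d, ?w}")
  proof
    show "(\<lambda>v. hw (?c v)) ` {v. v \<noteq> 0} \<subseteq> {?d, ?w}"
      by (auto simp: hw_codeword_complement split: if_splits)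
    have "hw (?c (basis_vec i1)) = ?d" "hw (?c (basis_vec i0)) = ?w"
      using i1 i0 by (subst hw_codeword_complement; auto simp: basis_vec_def fun_eq_iff)+
    moreover have "basis_vec i1 \<noteq> (0 :: 'n \<Rightarrow> 'a)" "basis_vec i0 \<noteq> (0 :: 'n \<Rightarrow> 'a)"
      by (auto simp: basis_vec_def fun_eq_iff)
    ultimately show "{?d, ?w} \<subseteq> (\<lambda>v. hw (?c v)) ` {v. v \<noteq> 0}"
      using image_eqI[of ?d "\<lambda>v. hw (?c v)" "basis_vec i1" "{v. v \<noteq> 0}"]
        image_eqI[of ?w "\<lambda>v. hw (?c v)" "basis_vec i0" "{v. v \<noteq> 0}"] by simp
  qed
  finally show ?thesis
    by (simp add: codeP_eq_range_codeword)
qed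

section \<open>The Plotkin and Griesmer bounds\<close>

lemma one_less_CARD_field: "1 < CARD('a::{field,finite})"
proof -
  have "card {0, 1 :: 'a} \<le> CARD('a)"
    by (rule card_mono) simp_all
  then show ?thesis
    by simp
qed

lemma is_lin_code_subspace: "is_lin_code I C \<Longrightarrow> fun_vs.subspace C"
  by (auto simp: is_lin_code_def fun_vs.subspace_def zero_fun_def plus_fun_def)

lemma is_lin_code_finite:
  fixes C :: "('i \<Rightarrow> 'a::{field,finite}) set"
  assumes "is_lin_code I C"
  shows "finite C"
proof -
  have "C \<subseteq> supported_on I" "finite I"
    using assms by (auto simp: is_lin_code_def supported_on_def)
  then show ?thesis
    using finite_subset finite_supported_on by blast
qed

lemma card_lin_code:
  fixes C :: "('i \<Rightarrow> 'a::{field,finite}) set"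
  assumes "is_lin_code I C"
  shows "card C = CARD('a) ^ code_dim C"
  unfolding code_dim_def
  by (rule card_subspace[OF is_lin_code_subspace[OF assms] is_lin_code_finite[OF assms]])

lemma min_dist_le_hw:
  assumes "finite C" "c \<in> C" "c \<noteq> (\<lambda>i. 0)"
  shows "min_dist C \<le> hw c"
proof -
  have "nz_weights C \<subseteq> hw ` C"
    by (auto simp: nz_weights_def)
  then have "finite (nz_weights C)"
    using assms(1) finite_subset by blast
  moreover have "hw c \<in> nz_weights C"
    using assms(2,3) by (auto simp: nz_weights_def)
  ultimately show ?thesis
    unfolding min_dist_def by (rule Min_le)
qed

lemma plotkin_bound:
  fixes C :: "('i \<Rightarrow> 'a::{field,finite}) set"
  assumes C: "is_lin_code I C" and weight: "\<And>c. c \<in> C \<Longrightarrow> c \<noteq> (\<lambda>i. 0) \<Longrightarrow> \<delta> \<le> hw c"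
  shows "CARD('a) * ((card C - 1) * \<delta>) \<le> (CARD('a) - 1) * card I * card C"
proof -
  have I: "finite I" and supp: "\<And>c. c \<in> C \<Longrightarrow> {i. c i \<noteq> 0} \<subseteq> I" and zero: "(\<lambda>i. 0) \<in> C"
    using C by (auto simp: is_lin_code_def)
  have sub: "fun_vs.subspace C" and fin: "finite C"
    using C by (rule is_lin_code_subspace, rule is_lin_code_finite)
  \<comment> \<open>Count the nonzero entries of all codewords, by rows and by columns.\<close>
  have "(card C - 1) * \<delta> = (\<Sum>c\<in>C - {\<lambda>i. 0}. \<delta>)"
    using fin zero by simp
  also have "\<dots> \<le> (\<Sum>c\<in>C - {\<lambda>i. 0}. hw c)"
    by (rule sum_mono) (use weight in auto)
  also have "\<dots> \<le> (\<Sum>c\<in>C. hw c)"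
    by (rule sum_mono2) (use fin in auto)
  also have "\<dots> = (\<Sum>c\<in>C. \<Sum>i\<in>I. of_bool (c i \<noteq> 0))"
  proof (rule sum.cong)
    fix c assume "c \<in> C"
    then have "{i. c i \<noteq> 0} = I \<inter> {i. c i \<noteq> 0}"
      using supp by blast
    then show "hw c = (\<Sum>i\<in>I. of_bool (c i \<noteq> 0))"
      using I by (simp add: hw_def)
  qed simp
  also have "\<dots> = (\<Sum>i\<in>I. card {c \<in> C. c i \<noteq> 0})"
    using fin by (subst sum.swap) (simp add: Int_def)
  finally have count: "(card C - 1) * \<delta> \<le> (\<Sum>i\<in>I. card {c \<in> C. c i \<noteq> 0})" .
  have column: "CARD('a) * card {c \<in> C. c i \<noteq> 0} \<le> (CARD('a) - 1) * card C" for i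
  proof (cases "\<exists>c\<in>C. c i \<noteq> 0")
    case True
    then obtain c0 where "c0 \<in> C" "c0 i \<noteq> 0"
      by blast
    then have "CARD('a) * card {c \<in> C. c i \<noteq> 0} = (CARD('a) - 1) * card C"
      by (intro card_nonkernel_functional[where \<phi> = "\<lambda>c. c i" and w = c0] sub fin) simp_all
    then show ?thesis
      by simp
  next
    case False
    then have "{c \<in> C. c i \<noteq> 0} = {}"
      by blast
    then have "card {c \<in> C. c i \<noteq> 0} = 0"
      by (simp only: card.empty)
    then show ?thesis
      by simp
  qed
  have "CARD('a) * ((card C - 1) * \<delta>) \<le> CARD('a) * (\<Sum>i\<in>I. card {c \<in> C. c i \<noteq> 0})"
    using count by simp
  also have "\<dots> = (\<Sum>i\<in>I. CARD('a) * card {c \<in> C. c i \<noteq> 0})"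
    by (rule sum_distrib_left)
  also have "\<dots> \<le> card I * ((CARD('a) - 1) * card C)"
    using sum_bounded_above[of I _ "(CARD('a) - 1) * card C"] column by simp
  finally show ?thesis
    by (simp add: ac_simps)
qed

lemma dist_optimal_if_plotkin_tight:
  fixes n k d :: nat
  assumes tight: "(CARD('a::{field,finite}) - 1) * n = CARD('a) * d" and big: "d + 1 < CARD('a) ^ k"
  shows "dist_optimal n k d TYPE('a)"
  unfolding dist_optimal_def
proof
  assume "\<exists>C :: (nat \<Rightarrow> 'a) set. is_lin_code {..<n} C \<and> code_dim C = k \<and> min_dist C = d + 1"
  then obtain C :: "(nat \<Rightarrow> 'a) set"
    where C: "is_lin_code {..<n} C" and dim: "code_dim C = k" and md: "min_dist C = d + 1"
    by blast
  have N: "card C = CARD('a) ^ k"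
    using card_lin_code[OF C] dim by simp
  have "d + 1 \<le> hw c" if "c \<in> C" "c \<noteq> (\<lambda>i. 0)" for c
    using min_dist_le_hw[OF is_lin_code_finite[OF C] that] md by simp
  then have "CARD('a) * ((card C - 1) * (d + 1)) \<le> (CARD('a) - 1) * card {..<n} * card C"
    by (rule plotkin_bound[OF C])
  also have "\<dots> = CARD('a) * (d * card C)"
    using tight by simp
  finally have "(card C - 1) * (d + 1) \<le> d * card C"
    by simp
  then have "card C \<le> d + 1"
    by (cases "card C") (simp_all add: algebra_simps)
  then show False
    using N big by simp
qed

lemma dist_optimal_complement_code:
  assumes "0 < l" "l < m"
  shows "dist_optimal (CARD('a) ^ m - CARD('a) ^ l) m
    ((CARD('a) - 1) * CARD('a) ^ (m - 1) - (CARD('a) - 1) * CARD('a) ^ (l - 1)) TYPE('a::{field,finite})"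
proof (rule dist_optimal_if_plotkin_tight)
  let ?q = "CARD('a)"
  have m: "?q ^ m = ?q * ?q ^ (m - 1)" and l: "?q ^ l = ?q * ?q ^ (l - 1)"
    using assms by (simp_all add: power_eq_if)
  show "(?q - 1) * (?q ^ m - ?q ^ l) = ?q * ((?q - 1) * ?q ^ (m - 1) - (?q - 1) * ?q ^ (l - 1))"
    unfolding m l by (simp add: diff_mult_distrib2 ac_simps)
  have "0 < (?q - 1) * ?q ^ (l - 1)"
    using one_less_CARD_field[where 'a='a] by simp
  moreover have "(?q - 1) * ?q ^ (l - 1) \<le> (?q - 1) * ?q ^ (m - 1)"
    using assms by (intro mult_le_mono2 power_increasing) auto
  ultimately have "(?q - 1) * ?q ^ (m - 1) - (?q - 1) * ?q ^ (l - 1) + 1 \<le> (?q - 1) * ?q ^ (m - 1)"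
    by arith
  also have "\<dots> < ?q ^ m"
    unfolding m by simp
  finally show "(?q - 1) * ?q ^ (m - 1) - (?q - 1) * ?q ^ (l - 1) + 1 < ?q ^ m" .
qed

lemma sum_geometric_nat: "(\<Sum>i<k. (q - 1) * q ^ i) = q ^ k - (1::nat)"
proof (cases "q = 0")
  case False
  then show ?thesis
    by (induction k) (simp_all add: diff_mult_distrib algebra_simps Suc_le_eq)
qed (simp add: power_0_left)

lemma ceiling_griesmer_term:
  fixes q l m i :: nat
  assumes "0 < q" "0 < l" "l < m" "i < m"
  shows "nat \<lceil>real ((q - 1) * q ^ (m - 1) - (q - 1) * q ^ (l - 1)) / real (q ^ i)\<rceil>
    = (q - 1) * q ^ (m - 1 - i) - (if i < l then (q - 1) * q ^ (l - 1 - i) else 0)"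
proof -
  have pm: "q ^ (m - 1) = q ^ i * q ^ (m - 1 - i)"
    using assms(4) by (simp flip: power_add)
  show ?thesis
  proof (cases "i < l")
    case True
    have "q ^ (l - 1) = q ^ i * q ^ (l - 1 - i)"
      using True by (simp flip: power_add)
    then have "(q - 1) * q ^ (m - 1) - (q - 1) * q ^ (l - 1)
        = q ^ i * ((q - 1) * q ^ (m - 1 - i) - (q - 1) * q ^ (l - 1 - i))"
      unfolding pm by (simp add: algebra_simps diff_mult_distrib2)
    then show ?thesis
      using True assms(1) by simp
  next
    case False
    define r where "r = real ((q - 1) * q ^ (l - 1)) / real (q ^ i)"
    have "(q - 1) * q ^ (l - 1) < q ^ l"
      using assms(1,2) by (cases l) simp_all
    also have "\<dots> \<le> q ^ i"
      using False assms(1) by (simp add: power_increasing)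
    finally have "real ((q - 1) * q ^ (l - 1)) < real (q ^ i)"
      by (simp only: of_nat_less_iff)
    then have r: "0 \<le> r" "r < 1"
      unfolding r_def using assms(1) by (simp_all add: divide_less_eq)
    have "(q - 1) * q ^ (l - 1) \<le> (q - 1) * q ^ (m - 1)"
      using assms(1,3) by (intro mult_le_mono2 power_increasing) auto
    then have "real ((q - 1) * q ^ (m - 1) - (q - 1) * q ^ (l - 1)) / real (q ^ i)
        = real ((q - 1) * q ^ (m - 1 - i)) - r"
      unfolding r_def pm using assms(1) by (simp add: of_nat_diff diff_divide_distrib)
    also have "\<lceil>\<dots>\<rceil> = int ((q - 1) * q ^ (m - 1 - i))"
      using r by (intro ceiling_unique) simp_all
    finally have ceiling: "\<lceil>real ((q - 1) * q ^ (m - 1) - (q - 1) * q ^ (l - 1)) / real (q ^ i)\<rceil>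
        = int ((q - 1) * q ^ (m - 1 - i))" .
    show ?thesis
      using False by (simp only: ceiling nat_int) simp
  qed
qed

lemma griesmer_complement_code:
  assumes "0 < l" "l < m"
  shows "griesmer (CARD('a) ^ m - CARD('a) ^ l) m
    ((CARD('a) - 1) * CARD('a) ^ (m - 1) - (CARD('a) - 1) * CARD('a) ^ (l - 1)) TYPE('a::finite)"
proof -
  let ?q = "CARD('a)"
  have geometric: "(\<Sum>i<k. (?q - 1) * ?q ^ (k - 1 - i)) = ?q ^ k - 1" for k
  proof -
    have "(\<Sum>i<k. (?q - 1) * ?q ^ (k - 1 - i)) = (\<Sum>i<k. (?q - 1) * ?q ^ i)"
      using sum.nat_diff_reindex[where g = "\<lambda>i. (?q - 1) * ?q ^ i" and n = k] by simp
    then show ?thesis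
      by (simp only: sum_geometric_nat)
  qed
  have le: "(if i < l then (?q - 1) * ?q ^ (l - 1 - i) else 0) \<le> (?q - 1) * ?q ^ (m - 1 - i)" for i
    using assms by (auto intro!: mult_le_mono2 power_increasing)
  have "(\<Sum>i<m. nat \<lceil>real ((?q - 1) * ?q ^ (m - 1) - (?q - 1) * ?q ^ (l - 1)) / real (?q ^ i)\<rceil>)
      = (\<Sum>i<m. (?q - 1) * ?q ^ (m - 1 - i) - (if i < l then (?q - 1) * ?q ^ (l - 1 - i) else 0))"
    using assms by (intro sum.cong refl ceiling_griesmer_term) simp_all
  also have "\<dots> = (\<Sum>i<m. (?q - 1) * ?q ^ (m - 1 - i))
      - (\<Sum>i<m. if i < l then (?q - 1) * ?q ^ (l - 1 - i) else 0)"
    by (rule sum_subtractf_nat) (rule le)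
  also have "(\<Sum>i<m. if i < l then (?q - 1) * ?q ^ (l - 1 - i) else 0) = (\<Sum>i<l. (?q - 1) * ?q ^ (l - 1 - i))"
  proof -
    have "{i \<in> {..<m}. i < l} = {..<l}"
      using assms by auto
    then show ?thesis
      by (simp only: sum.inter_filter[symmetric] finite_lessThan)
  qed
  also have "(\<Sum>i<m. (?q - 1) * ?q ^ (m - 1 - i)) - (\<Sum>i<l. (?q - 1) * ?q ^ (l - 1 - i))
      = ?q ^ m - ?q ^ l"
    unfolding geometric using assms by (simp add: diff_diff_add power_increasing)
  finally show ?thesis
    unfolding griesmer_def .
qed

section \<open>Minimality\<close>

lemma proportional_if_kernel_subset:
  fixes u v :: "'n::finite \<Rightarrow> 'a::field"
  assumes v: "v k \<noteq> 0" and kernel: "\<And>x. dotp v x = 0 \<Longrightarrow> dotp u x = 0"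
  shows "u = (\<lambda>j. u k / v k * v j)"
proof
  fix j
  define c where "c = v j / v k"
  define x :: "'n \<Rightarrow> 'a" where "x = basis_vec j - (\<lambda>i. c * basis_vec k i)"
  have "dotp v x = v j - c * v k"
    by (simp add: x_def dotp_diff_right dotp_scale_right dotp_basis_vec_right)
  also have "\<dots> = 0"
    using v by (simp add: c_def)
  finally have "dotp u x = 0"
    by (rule kernel)
  moreover have "dotp u x = u j - c * u k"
    by (simp add: x_def dotp_diff_right dotp_scale_right dotp_basis_vec_right)
  ultimately show "u j = u k / v k * v j"
    using v by (simp add: c_def field_simps)
qed

lemma card_dotp_kernel_diff:
  fixes u v :: "'n::finite \<Rightarrow> 'a::{field,finite}"
  assumes n: "2 \<le> CARD('n)" and v: "v i0 \<noteq> 0" and x0: "dotp v x0 = 0" "dotp u x0 \<noteq> 0"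
  shows "card {x. dotp v x = 0 \<and> dotp u x \<noteq> 0} = (CARD('a) - 1) * CARD('a) ^ (CARD('n) - 2)"
proof -
  let ?q = "CARD('a)" and ?K = "{x :: 'n \<Rightarrow> 'a. dotp v x = 0}"
  have K: "fun_vs.subspace ?K"
    by (simp add: fun_vs.subspace_def dotp_add_right dotp_scale_right)
  obtain k where k: "CARD('n) = Suc (Suc k)"
    using n by (metis add_2_eq_Suc le_Suc_ex)
  have "dotp v (basis_vec i0) \<noteq> 0"
    using v by (simp add: dotp_basis_vec_right)
  then have "card (UNIV :: ('n \<Rightarrow> 'a) set) = ?q * card {x \<in> UNIV. dotp v x = 0}"
    by (rule card_kernel_functional[where \<phi> = "dotp v", OF fun_vs.subspace_UNIV finite_class.finite_UNIV
          dotp_add_right dotp_scale_right UNIV_I])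
  then have "card ?K = ?q * ?q ^ (CARD('n) - 2)"
    using k by (simp add: card_fun)
  moreover have "?q * card {x \<in> ?K. dotp u x \<noteq> 0} = (?q - 1) * card ?K"
    using x0 by (intro card_nonkernel_functional[where \<phi> = "dotp u", OF K _ dotp_add_right dotp_scale_right]) simp_all
  ultimately show ?thesis
    by simp
qed

lemma minimal_code_codeP_complement:
  assumes "card L + 2 \<le> CARD('n)"
  shows "minimal_code (codeP (- supported_on L :: ('n::finite \<Rightarrow> 'a::{field,finite}) set))"
  unfolding minimal_code_def codeP_eq_range_codeword
proof (intro ballI impI, elim conjE)
  let ?P = "- supported_on L :: ('n \<Rightarrow> 'a) set" and ?q = "CARD('a)"
  fix c c'
  assume "c \<in> range (codeword ?P)" "c' \<in> range (codeword ?P)" and nz: "c \<noteq> (\<lambda>i. 0)"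
    and supp: "{i. c' i \<noteq> 0} \<subseteq> {i. c i \<noteq> 0}"
  then obtain v u where c: "c = codeword ?P v" and c': "c' = codeword ?P u"
    by blast
  have "v \<noteq> 0"
  proof
    assume "v = 0"
    then have "c = (\<lambda>i. 0)"
      using c by (simp add: zero_fun_def[symmetric])
    with nz show False
      by contradiction
  qed
  then obtain i0 where i0: "v i0 \<noteq> 0"
    by (auto simp: fun_eq_iff)
  show "\<exists>a. c' = (\<lambda>i. a * c i)"
  proof (cases "\<forall>x. dotp v x = 0 \<longrightarrow> dotp u x = 0")
    case True
    define a where "a = u i0 / v i0"
    have "u = (\<lambda>j. a * v j)"
      unfolding a_def using True by (intro proportional_if_kernel_subset[where k = i0 and v = v, OF i0]) auto
    then have "c' = (\<lambda>d. a * c d)"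
      unfolding c c' by (simp add: codeword_scale)
    then show ?thesis ..
  next
    case False
    then obtain x0 where x0: "dotp v x0 = 0" "dotp u x0 \<noteq> 0"
      by blast
    let ?X = "{x. dotp v x = 0 \<and> dotp u x \<noteq> 0}"
    have "?X \<subseteq> supported_on L - {0}"
    proof
      fix x assume x: "x \<in> ?X"
      have "x \<in> supported_on L"
      proof (rule ccontr)
        assume "x \<notin> supported_on L"
        then have "c' x \<noteq> 0" "c x = 0"
          using x by (simp_all add: c c' codeword_def)
        then show False
          using supp by blast
      qed
      then show "x \<in> supported_on L - {0}"
        using x by auto
    qed
    then have "card ?X \<le> card (supported_on L - {0} :: ('n \<Rightarrow> 'a) set)"
      by (intro card_mono) simp_all
    also have "\<dots> = card (supported_on L :: ('n \<Rightarrow> 'a) set) - 1"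
      by (rule card_Diff_singleton) (simp add: supported_on_def)
    also have "\<dots> < ?q ^ card L"
      by (simp add: card_supported_on)
    also have "\<dots> \<le> ?q ^ (CARD('n) - 2)"
      using assms by (intro power_increasing) auto
    also have "\<dots> \<le> (?q - 1) * ?q ^ (CARD('n) - 2)"
      using one_less_CARD_field[where 'a='a] by simp
    also have "\<dots> = card ?X"
      using assms by (intro card_dotp_kernel_diff[OF _ i0 x0, symmetric]) simp
    finally show ?thesis
      by simp
  qed
qed

theorem mainTheorem7:
  fixes \<omega> :: "'a::{field,finite}" and L :: "'n::finite set"
  assumes q: "CARD('a) = 8"
    and root: "\<omega>^3 + \<omega> + 1 = 0"
    and L: "L \<noteq> {}" "L \<noteq> UNIV"
  defines "m \<equiv> CARD('n)"
    and "Dc \<equiv> UNIV - Dset \<omega> L"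
    and "d \<equiv> 7 * 2^(3*(CARD('n)-1)) - 7 * 2^(3*(card L - 1))"
  shows "is_lin_code Dc (codeP Dc)
    \<and> card Dc = 2^(3*m) - 2^(3*card L)
    \<and> code_dim (codeP Dc) = m
    \<and> min_dist (codeP Dc) = d
    \<and> is_l_weight 2 (codeP Dc)
    \<and> hw ` codeP Dc = {0, d, 7 * 2^(3*(m-1))}
    \<and> griesmer (card Dc) m d TYPE('a)
    \<and> dist_optimal (card Dc) m d TYPE('a)
    \<and> (3 * (int m - int (card L)) - 4 \<ge> 0 \<longrightarrow> minimal_code (codeP Dc))"
proof -
  let ?q = "CARD('a)" and ?l = "card L"
  have Dc: "Dc = - supported_on L"
    by (simp add: Dc_def Dset_eq_supported_on[OF q root] Compl_eq_Diff_UNIV)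
  have l: "0 < ?l" "?l < m"
    using L by (auto simp: m_def card_gt_0_iff intro!: psubset_card_mono)
  have pow8: "2 ^ (3 * k) = ?q ^ k" for k :: nat
    using q by (simp add: power_mult)
  have d: "d = (?q - 1) * ?q ^ (m - 1) - (?q - 1) * ?q ^ (?l - 1)"
    using q by (simp add: d_def m_def pow8)
  have w: "7 * 2 ^ (3 * (m - 1)) = (?q - 1) * ?q ^ (m - 1)"
    using q by (simp add: pow8)
  have card: "card Dc = ?q ^ m - ?q ^ ?l"
    by (simp add: Dc Compl_eq_Diff_UNIV card_Diff_subset card_fun card_supported_on m_def)
  have weights: "nz_weights (codeP Dc) = {d, 7 * 2 ^ (3 * (m - 1))}"
    unfolding Dc d w by (unfold m_def) (rule nz_weights_codeP_complement[OF L])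
  have less: "d < 7 * 2 ^ (3 * (m - 1))"
    unfolding d w using l q by (simp add: diff_less)
  show ?thesis
  proof (intro conjI impI)
    show "is_lin_code Dc (codeP Dc)"
      by (rule is_lin_code_codeP)
    then have "(\<lambda>i. 0) \<in> codeP Dc"
      by (simp add: is_lin_code_def)
    then show "hw ` codeP Dc = {0, d, 7 * 2 ^ (3 * (m - 1))}"
      by (simp add: image_hw_eq_insert_nz_weights weights)
    show "card Dc = 2 ^ (3 * m) - 2 ^ (3 * ?l)"
      by (simp add: card pow8)
    show "code_dim (codeP Dc) = m"
      unfolding Dc m_def by (rule code_dim_codeP[OF inj_codeword_complement[OF L(2)]])
    show "min_dist (codeP Dc) = d"
      using less by (simp add: min_dist_def weights)
    show "is_l_weight 2 (codeP Dc)"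
      using less by (simp add: is_l_weight_def weights)
    show "griesmer (card Dc) m d TYPE('a)"
      unfolding card d by (rule griesmer_complement_code[OF l])
    show "dist_optimal (card Dc) m d TYPE('a)"
      unfolding card d by (rule dist_optimal_complement_code[OF l])
    assume "3 * (int m - int ?l) - 4 \<ge> 0"
    then show "minimal_code (codeP Dc)"
      unfolding Dc by (intro minimal_code_codeP_complement) (simp add: m_def)
  qed
qed

end
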